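(* Suppose $u_1$ is cyclically separable. For any Nash equilibrium $(\sigma_0^*,\sigma_1^*,\sigma_2^* )$ and any period-$t$ public history $h^t\in\mathrm{supp}(\mathbb{P}_t)$, the stage strategy $\sigma_1^*(h^t)$ is $u_1$-cyclically monotone.
   Context: Stage game. Three players $0,1,2$ have finite action sets $A_0,A_1,A_2$; $Y_0,Y_1$ are finite signal sets. Player 0 takes $a_0$, generating a signal $y_0\sim\rho_0(\cdot\mid a_0)$ observed only by player 1; players 1 and 2 then simultaneously take $a_1,a_2$, generating a public signal $y_1\sim\rho_1(\cdot\mid a_1,a_2)$. Assume: (i) $\rho_0(y_0\mid a_0)>0$ always; (ii) $\rho_1(y_1\mid a_1,a_2)>0$ implies $\rho_1(y_1\mid a_1,a_2')>0$; (iii) for every $a_2$ the vectors $(\rho_1(\cdot\mid a_1,a_2))_{a_1\in A_1}$ are linearly independent. Stage strategies: $\alpha_0\in\Delta(A_0)$, $\alpha_2\in\Delta(A_2)$, $s_1:Y_0\to\Delta(A_1)$. Payoffs $u_0:A_0\times A_1\to\mathbb{R}$, $u_i:Y_0\times A_1\times A_2\to\mathbb{R}$ extended by expectation; $u_1(\cdot,\alpha_2)$ is $(y_0,a_1)\mapsto\sum_{a_2}\alpha_2(a_2)u_1(y_0,a_1,a_2)$. Repeated game: periods $t=0,1,\dots$; player 1 long-lived with discount factor $\delta\in(0,1)$ and payoff $(1-\delta)\sum_t\delta^tu_1$; new myopic players 0 and 2 each period observe only the public history $h^t\in Y_1^t$. Player 1's type is drawn from a full-support prior on a countable set $\Omega$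 consisting of a rational type $\omega_R$ and commitment types $\omega_{s_1}$ that play $s_1$ every period. In a Nash equilibrium $(\sigma_0^*,\sigma_1^*,\sigma_2^* )$, $\sigma_1^*$ is the rational type's strategy (a map from public histories to stage strategies), and $\mathbb{P}_t$ is the induced distribution over period-$t$ public histories conditional on player 1 being rational. For $u:Y_0\times A_1\to\mathbb{R}$, $S\subset Y_0\times A_1$ is $u$-cyclically monotone if for every finite $\{(x_i,y_i)\}_{i=1}^N\subset S$ (with $y_{N+1}=y_1$), $\sum_iu(x_i,y_i)\ge\sum_iu(x_i,y_{i+1})$. $u_1$ is cyclically separable if any $S$ that is $u_1(\cdot,\alpha_2)$-cyclically monotone for some $\alpha_2$ is so for all $\alpha_2$. A stage strategy $s_1$ is $u_1$-cyclically monotone if $\{(y_0,a_1):a_1\in\mathrm{supp}(s_1(y_0))\}$ is $u_1(\cdot,\alpha_2)$-cyclically monotone for all $\alpha_2$. *)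

theory Defs
  imports "HOL-Probability.Probability"
begin

definition cyc_monotone :: "('x \<Rightarrow> 'y \<Rightarrow> real) \<Rightarrow> ('x \<times> 'y) set \<Rightarrow> bool" where
  "cyc_monotone u S \<longleftrightarrow>
     (\<forall>N::nat. \<forall>x y. N \<ge> 1 \<longrightarrow> (\<forall>i<N. (x i, y i) \<in> S) \<longrightarrow>
        (\<Sum>i<N. u (x i) (y i)) \<ge> (\<Sum>i<N. u (x i) (y (Suc i mod N))))"

definition u1_at :: "('y0 \<Rightarrow> 'a1 \<Rightarrow> 'a2 \<Rightarrow> real) \<Rightarrow> 'a2 pmf \<Rightarrow> 'y0 \<Rightarrow> 'a1 \<Rightarrow> real" where
  "u1_at u1 \<alpha>2 y0 a1 = measure_pmf.expectation \<alpha>2 (\<lambda>a2. u1 y0 a1 a2)"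

definition cyclically_separable :: "('y0 \<Rightarrow> 'a1 \<Rightarrow> 'a2 \<Rightarrow> real) \<Rightarrow> bool" where
  "cyclically_separable u1 \<longleftrightarrow>
     (\<forall>S. (\<exists>\<alpha>2. cyc_monotone (u1_at u1 \<alpha>2) S) \<longrightarrow> (\<forall>\<alpha>2. cyc_monotone (u1_at u1 \<alpha>2) S))"

definition strategy_cyc_monotone :: "('y0 \<Rightarrow> 'a1 \<Rightarrow> 'a2 \<Rightarrow> real) \<Rightarrow> ('y0 \<Rightarrow> 'a1 pmf) \<Rightarrow> bool" where
  "strategy_cyc_monotone u1 s1 \<longleftrightarrow>
     (\<forall>\<alpha>2. cyc_monotone (u1_at u1 \<alpha>2) {(y0, a1). a1 \<in> set_pmf (s1 y0)})"

definition stage_outcome ::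
  "'a0 pmf \<Rightarrow> ('a0 \<Rightarrow> 'y0 pmf) \<Rightarrow> ('y0 \<Rightarrow> 'a1 pmf) \<Rightarrow> 'a2 pmf \<Rightarrow> ('a0 \<times> 'y0 \<times> 'a1 \<times> 'a2) pmf" where
  "stage_outcome \<alpha>0 \<rho>0 s1 \<alpha>2 =
     bind_pmf \<alpha>0 (\<lambda>a0. bind_pmf (\<rho>0 a0) (\<lambda>y0. bind_pmf (s1 y0) (\<lambda>a1.
       map_pmf (\<lambda>a2. (a0, y0, a1, a2)) \<alpha>2)))"

definition stage_signal ::
  "'a0 pmf \<Rightarrow> ('a0 \<Rightarrow> 'y0 pmf) \<Rightarrow> ('y0 \<Rightarrow> 'a1 pmf) \<Rightarrow> 'a2 pmf \<Rightarrow> ('a1 \<Rightarrow> 'a2 \<Rightarrow> 'y1 pmf) \<Rightarrow> 'y1 pmf" where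
  "stage_signal \<alpha>0 \<rho>0 s1 \<alpha>2 \<rho>1 =
     bind_pmf (stage_outcome \<alpha>0 \<rho>0 s1 \<alpha>2) (\<lambda>(a0, y0, a1, a2). \<rho>1 a1 a2)"

text \<open>Public histories are lists of public signals in chronological order.
  Strategies of players 0 and 2 and (public) strategies of player 1 are maps from
  public histories to stage strategies.\<close>
primrec public_hist ::
  "('y1 list \<Rightarrow> 'a0 pmf) \<Rightarrow> ('a0 \<Rightarrow> 'y0 pmf) \<Rightarrow> ('y1 list \<Rightarrow> 'y0 \<Rightarrow> 'a1 pmf) \<Rightarrow>
   ('y1 list \<Rightarrow> 'a2 pmf) \<Rightarrow> ('a1 \<Rightarrow> 'a2 \<Rightarrow> 'y1 pmf) \<Rightarrow> nat \<Rightarrow> 'y1 list pmf" where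
  "public_hist \<sigma>0 \<rho>0 f \<sigma>2 \<rho>1 0 = return_pmf []"
| "public_hist \<sigma>0 \<rho>0 f \<sigma>2 \<rho>1 (Suc t) =
     bind_pmf (public_hist \<sigma>0 \<rho>0 f \<sigma>2 \<rho>1 t)
       (\<lambda>h. map_pmf (\<lambda>y1. h @ [y1]) (stage_signal (\<sigma>0 h) \<rho>0 (f h) (\<sigma>2 h) \<rho>1))"

definition lr_payoff ::
  "real \<Rightarrow> ('y0 \<Rightarrow> 'a1 \<Rightarrow> 'a2 \<Rightarrow> real) \<Rightarrow> ('y1 list \<Rightarrow> 'a0 pmf) \<Rightarrow> ('a0 \<Rightarrow> 'y0 pmf) \<Rightarrow>
   ('y1 list \<Rightarrow> 'y0 \<Rightarrow> 'a1 pmf) \<Rightarrow> ('y1 list \<Rightarrow> 'a2 pmf) \<Rightarrow> ('a1 \<Rightarrow> 'a2 \<Rightarrow> 'y1 pmf) \<Rightarrow> real" where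
  "lr_payoff \<delta> u1 \<sigma>0 \<rho>0 f \<sigma>2 \<rho>1 =
     (1 - \<delta>) * (\<Sum>t. \<delta> ^ t *
        measure_pmf.expectation (public_hist \<sigma>0 \<rho>0 f \<sigma>2 \<rho>1 t)
          (\<lambda>h. measure_pmf.expectation (stage_outcome (\<sigma>0 h) \<rho>0 (f h) (\<sigma>2 h))
                  (\<lambda>(a0, y0, a1, a2). u1 y0 a1 a2)))"

text \<open>Types of player 1: None is the rational type omega_R, Some s1 is the commitment
  type omega_{s1} playing s1 in every period.\<close>
definition type_play ::
  "('y1 list \<Rightarrow> 'y0 \<Rightarrow> 'a1 pmf) \<Rightarrow> ('y0 \<Rightarrow> 'a1 pmf) option \<Rightarrow> 'y1 list \<Rightarrow> 'y0 \<Rightarrow> 'a1 pmf" where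
  "type_play \<sigma>1 \<omega> = (case \<omega> of None \<Rightarrow> \<sigma>1 | Some s1 \<Rightarrow> (\<lambda>h. s1))"

text \<open>The conditions for the short-run players are stated with the unnormalised
  posterior weights prior(omega) * P(h | omega), so they are vacuous at histories of
  probability zero.\<close>
definition nash_eq ::
  "('a0 \<Rightarrow> 'y0 pmf) \<Rightarrow> ('a1 \<Rightarrow> 'a2 \<Rightarrow> 'y1 pmf) \<Rightarrow> ('a0 \<Rightarrow> 'a1 \<Rightarrow> real) \<Rightarrow>
   ('y0 \<Rightarrow> 'a1 \<Rightarrow> 'a2 \<Rightarrow> real) \<Rightarrow> ('y0 \<Rightarrow> 'a1 \<Rightarrow> 'a2 \<Rightarrow> real) \<Rightarrow> real \<Rightarrow>
   ('y0 \<Rightarrow> 'a1 pmf) option pmf \<Rightarrow>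
   ('y1 list \<Rightarrow> 'a0 pmf) \<Rightarrow> ('y1 list \<Rightarrow> 'y0 \<Rightarrow> 'a1 pmf) \<Rightarrow> ('y1 list \<Rightarrow> 'a2 pmf) \<Rightarrow> bool" where
  "nash_eq \<rho>0 \<rho>1 u0 u1 u2 \<delta> prior \<sigma>0 \<sigma>1 \<sigma>2 \<longleftrightarrow>
     (\<forall>f. lr_payoff \<delta> u1 \<sigma>0 \<rho>0 f \<sigma>2 \<rho>1 \<le> lr_payoff \<delta> u1 \<sigma>0 \<rho>0 \<sigma>1 \<sigma>2 \<rho>1) \<and>
     (\<forall>h \<alpha>0.
        measure_pmf.expectation prior (\<lambda>\<omega>.
          pmf (public_hist \<sigma>0 \<rho>0 (type_play \<sigma>1 \<omega>) \<sigma>2 \<rho>1 (length h)) h *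
          measure_pmf.expectation (stage_outcome \<alpha>0 \<rho>0 (type_play \<sigma>1 \<omega> h) (\<sigma>2 h))
            (\<lambda>(a0, y0, a1, a2). u0 a0 a1))
        \<le> measure_pmf.expectation prior (\<lambda>\<omega>.
          pmf (public_hist \<sigma>0 \<rho>0 (type_play \<sigma>1 \<omega>) \<sigma>2 \<rho>1 (length h)) h *
          measure_pmf.expectation (stage_outcome (\<sigma>0 h) \<rho>0 (type_play \<sigma>1 \<omega> h) (\<sigma>2 h))
            (\<lambda>(a0, y0, a1, a2). u0 a0 a1))) \<and>
     (\<forall>h \<alpha>2.
        measure_pmf.expectation prior (\<lambda>\<omega>.
          pmf (public_hist \<sigma>0 \<rho>0 (type_play \<sigma>1 \<omega>) \<sigma>2 \<rho>1 (length h)) h *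
          measure_pmf.expectation (stage_outcome (\<sigma>0 h) \<rho>0 (type_play \<sigma>1 \<omega> h) \<alpha>2)
            (\<lambda>(a0, y0, a1, a2). u2 y0 a1 a2))
        \<le> measure_pmf.expectation prior (\<lambda>\<omega>.
          pmf (public_hist \<sigma>0 \<rho>0 (type_play \<sigma>1 \<omega>) \<sigma>2 \<rho>1 (length h)) h *
          measure_pmf.expectation (stage_outcome (\<sigma>0 h) \<rho>0 (type_play \<sigma>1 \<omega> h) (\<sigma>2 h))
            (\<lambda>(a0, y0, a1, a2). u2 y0 a1 a2)))"

end

theory Submission
  imports Defs
begin

text \<open>If \<open>\<sigma>\<^sub>1(h)\<close> were not cyclically monotone then, by cyclical separability, its support
  would fail cyclical monotonicity for \<open>u\<^sub>1(\<cdot>, \<sigma>\<^sub>2(h))\<close> itself: along some cycle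
  \<open>(y\<^sub>0\<^sup>i, a\<^sub>1\<^sup>i)\<close> in the support, handing each signal \<open>y\<^sub>0\<^sup>i\<close> the next action
  \<open>a\<^sub>1\<^sup>i\<^sup>+\<^sup>1\<close> raises the stage payoff. Moving a small mass, weighted by \<open>1 / P(y\<^sub>0)\<close>, along
  this cycle leaves the distribution of player 1's action unchanged, hence also that of the
  public signal and of the whole public history process. The deviation at \<open>h\<close> alone thus
  gains \<open>\<delta>\<^sup>t P\<^sub>t(h)\<close> times the stage gain, contradicting equilibrium.\<close>

lemma expectation_eq_sum:
  fixes p :: "'a::finite pmf" and f :: "'a \<Rightarrow> real"
  shows "measure_pmf.expectation p f = (\<Sum>x\<in>UNIV. pmf p x * f x)"
  by (subst integral_measure_pmf_real[where A=UNIV]) (auto simp: mult.commute)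

lemma pmf_bind_eq_sum:
  fixes p :: "'a::finite pmf"
  shows "pmf (p \<bind> f) b = (\<Sum>a\<in>UNIV. pmf p a * pmf (f a) b)"
  by (simp add: pmf_bind expectation_eq_sum)

lemma abs_expectation_le:
  fixes f :: "'a \<Rightarrow> real"
  assumes "\<And>x. \<bar>f x\<bar> \<le> B"
  shows "\<bar>measure_pmf.expectation p f\<bar> \<le> B"
proof -
  have int: "integrable (measure_pmf p) f"
    using assms by (intro measure_pmf.integrable_const_bound[where B=B]) auto
  have bounds: "f x \<le> B" "- B \<le> f x" for x
    using assms[of x] by auto
  have "measure_pmf.expectation p f \<le> B"
    using int bounds by (intro measure_pmf.integral_le_const) auto
  moreover have "- B \<le> measure_pmf.expectation p f"
    using int bounds by (intro measure_pmf.integral_ge_const) auto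
  ultimately show ?thesis
    by (simp add: abs_le_iff)
qed

lemma exists_pmf_shift:
  fixes p :: "'a::finite pmf" and d :: "'a \<Rightarrow> real"
  assumes "(\<Sum>x\<in>UNIV. d x) = 0" and "\<And>x. 0 \<le> pmf p x + d x"
  shows "\<exists>p'. \<forall>x. pmf p' x = pmf p x + d x"
proof
  have "(\<Sum>x\<in>UNIV. pmf p x + d x) = 1"
    by (simp add: sum.distrib assms(1) sum_pmf_eq_1)
  then have "(\<integral>\<^sup>+x. ennreal (pmf p x + d x) \<partial>count_space UNIV) = 1"
    by (simp add: nn_integral_count_space_finite sum_ennreal assms(2))
  then show "\<forall>x. pmf (embed_pmf (\<lambda>x. pmf p x + d x)) x = pmf p x + d x"
    by (auto intro: pmf_embed_pmf assms(2))
qed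

lemma sum_lessThan_rotate:
  fixes g :: "nat \<Rightarrow> 'a::comm_monoid_add"
  assumes "N \<ge> 1"
  shows "(\<Sum>i<N. g (Suc i mod N)) = (\<Sum>i<N. g i)"
proof -
  obtain M where N: "N = Suc M" using assms by (cases N) auto
  have "(\<Sum>i<N. g (Suc i mod N)) = (\<Sum>i<M. g (Suc i)) + g 0"
    by (simp add: N)
  also have "\<dots> = (\<Sum>i<N. g i)"
    by (simp only: N sum.lessThan_Suc_shift add.commute)
  finally show ?thesis .
qed

text \<open>Net mass moved onto \<open>(a, b)\<close> when each \<open>x i\<close> is reassigned from \<open>y i\<close> to
  \<open>y ((i + 1) mod N)\<close>.\<close>
definition cycle_shift :: "nat \<Rightarrow> (nat \<Rightarrow> 'x) \<Rightarrow> (nat \<Rightarrow> 'y) \<Rightarrow> 'x \<Rightarrow> 'y \<Rightarrow> real" where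
  "cycle_shift N x y a b =
     (\<Sum>i<N. of_bool (x i = a \<and> y (Suc i mod N) = b) - of_bool (x i = a \<and> y i = b))"

lemma sum_sum_of_bool_eq:
  fixes U :: "'x::finite \<Rightarrow> 'y::finite \<Rightarrow> real"
  shows "(\<Sum>a\<in>UNIV. \<Sum>b\<in>UNIV. of_bool (c = a \<and> d = b) * U a b) = U c d"
proof -
  have "(\<Sum>b\<in>UNIV. of_bool (c = a \<and> d = b) * U a b) = of_bool (c = a) * U a d" for a
    by (cases "c = a") auto
  then show ?thesis by simp
qed

lemma sum_cycle_shift_mult:
  fixes U :: "'x::finite \<Rightarrow> 'y::finite \<Rightarrow> real"
  shows "(\<Sum>a\<in>UNIV. \<Sum>b\<in>UNIV. cycle_shift N x y a b * U a b)
    = (\<Sum>i<N. U (x i) (y (Suc i mod N))) - (\<Sum>i<N. U (x i) (y i))"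
proof -
  have "(\<Sum>a\<in>UNIV. \<Sum>b\<in>UNIV. cycle_shift N x y a b * U a b)
      = (\<Sum>i<N. (\<Sum>a\<in>UNIV. \<Sum>b\<in>UNIV. of_bool (x i = a \<and> y (Suc i mod N) = b) * U a b)
                - (\<Sum>a\<in>UNIV. \<Sum>b\<in>UNIV. of_bool (x i = a \<and> y i = b) * U a b))"
    unfolding cycle_shift_def sum_distrib_right left_diff_distrib sum_subtractf
    by (simp only: sum.swap[of _ UNIV "{..<N}"])
  then show ?thesis
    by (simp only: sum_sum_of_bool_eq sum_subtractf)
qed

lemma sum_cycle_shift_snd:
  fixes x :: "nat \<Rightarrow> 'x::finite" and y :: "nat \<Rightarrow> 'y::finite"
  shows "(\<Sum>b\<in>UNIV. cycle_shift N x y a0 b) = 0"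
proof -
  have "(\<Sum>b\<in>UNIV. of_bool (x i = a0 \<and> (d::'y) = b)) = (of_bool (x i = a0) :: real)" for i d
    by (cases "x i = a0") auto
  then show ?thesis
    unfolding cycle_shift_def by (subst sum.swap) (simp add: sum_subtractf)
qed

lemma sum_cycle_shift_fst:
  fixes x :: "nat \<Rightarrow> 'x::finite" and y :: "nat \<Rightarrow> 'y::finite"
  assumes "N \<ge> 1"
  shows "(\<Sum>a\<in>UNIV. cycle_shift N x y a b0) = 0"
  using sum_cycle_shift_mult[of N x y "\<lambda>a b. of_bool (b = b0)"]
    sum_lessThan_rotate[OF assms, of "\<lambda>i. of_bool (y i = b0) :: real"]
  by simp

lemma cycle_shift_ge: "- real N \<le> cycle_shift N x y a b"
proof -
  have "(\<Sum>i<N. - 1) \<le> cycle_shift N x y a b"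
    unfolding cycle_shift_def by (intro sum_mono) auto
  then show ?thesis by simp
qed

lemma cycle_shift_nonneg:
  assumes "\<forall>i<N. (x i, y i) \<noteq> (a, b)"
  shows "0 \<le> cycle_shift N x y a b"
  unfolding cycle_shift_def using assms by (intro sum_nonneg) auto

lemma exists_cycle_perturbation:
  fixes q :: "'x::finite pmf" and s :: "'x \<Rightarrow> 'y::finite pmf"
  assumes full: "\<And>a. 0 < pmf q a"
    and N: "N \<ge> 1" and cycle: "\<forall>i<N. y i \<in> set_pmf (s (x i))"
  shows "\<exists>\<epsilon>>0. \<exists>s'. \<forall>a b.
    pmf q a * pmf (s' a) b = pmf q a * pmf (s a) b + \<epsilon> * cycle_shift N x y a b"
proof -
  define c where "c = cycle_shift N x y"
  define m where "m = Min ((\<lambda>i. pmf q (x i) * pmf (s (x i)) (y i)) ` {..<N})"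
  define \<epsilon> where "\<epsilon> = m / real N"
  have m_le: "m \<le> pmf q (x i) * pmf (s (x i)) (y i)" if "i < N" for i
    unfolding m_def using that by (intro Min_le) auto
  have "m \<in> (\<lambda>i. pmf q (x i) * pmf (s (x i)) (y i)) ` {..<N}"
    unfolding m_def using N by (intro Min_in) (auto simp: lessThan_empty_iff)
  then have "m > 0"
    using cycle full by (auto simp: pmf_positive)
  then have \<epsilon>_pos: "\<epsilon> > 0"
    using N by (simp add: \<epsilon>_def)
  have shifted_nonneg: "0 \<le> pmf (s a) b + \<epsilon> / pmf q a * c a b" for a b
  proof (cases "\<exists>i<N. (x i, y i) = (a, b)")
    case True
    then obtain i where i: "i < N" "x i = a" "y i = b" by auto
    have "- (m / pmf q a) = \<epsilon> / pmf q a * - real N"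
      using N by (simp add: \<epsilon>_def)
    also have "\<dots> \<le> \<epsilon> / pmf q a * c a b"
      unfolding c_def using \<epsilon>_pos full[of a] by (intro mult_left_mono cycle_shift_ge) auto
    finally show ?thesis
      using m_le[OF i(1)] i full[of a] by (simp add: field_simps)
  next
    case False
    then show ?thesis
      unfolding c_def using \<epsilon>_pos full[of a]
      by (intro add_nonneg_nonneg mult_nonneg_nonneg cycle_shift_nonneg) auto
  qed
  have "(\<Sum>b\<in>UNIV. \<epsilon> / pmf q a * c a b) = 0" for a
    unfolding sum_distrib_left[symmetric] c_def sum_cycle_shift_snd by simp
  then have "\<forall>a. \<exists>p. \<forall>b. pmf p b = pmf (s a) b + \<epsilon> / pmf q a * c a b"
    using shifted_nonneg by (intro allI exists_pmf_shift)
  then obtain s' where "\<And>a b. pmf (s' a) b = pmf (s a) b + \<epsilon> / pmf q a * c a b"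
    by metis
  then have "pmf q a * pmf (s' a) b = pmf q a * pmf (s a) b + \<epsilon> * c a b" for a b
    using full[of a] by (simp add: field_simps)
  then show ?thesis
    using \<epsilon>_pos unfolding c_def by blast
qed

lemma improving_rearrangement_if_not_cyc_monotone:
  fixes q :: "'x::finite pmf" and s :: "'x \<Rightarrow> 'y::finite pmf" and U :: "'x \<Rightarrow> 'y \<Rightarrow> real"
  assumes full: "\<And>a. 0 < pmf q a"
    and not_cm: "\<not> cyc_monotone U {(a, b). b \<in> set_pmf (s a)}"
  shows "\<exists>s'. q \<bind> s' = q \<bind> s \<and>
    measure_pmf.expectation q (\<lambda>a. measure_pmf.expectation (s a) (U a))
      < measure_pmf.expectation q (\<lambda>a. measure_pmf.expectation (s' a) (U a))"
proof -
  obtain N x y where N: "N \<ge> 1" and cycle: "\<forall>i<N. y i \<in> set_pmf (s (x i))"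
    and gain: "(\<Sum>i<N. U (x i) (y i)) < (\<Sum>i<N. U (x i) (y (Suc i mod N)))"
    using not_cm unfolding cyc_monotone_def by (auto simp: not_le)
  obtain \<epsilon> s' where \<epsilon>_pos: "\<epsilon> > 0"
    and weighted: "\<And>a b. pmf q a * pmf (s' a) b = pmf q a * pmf (s a) b + \<epsilon> * cycle_shift N x y a b"
    using exists_cycle_perturbation[OF full N cycle] by blast
  have same_marginal: "q \<bind> s' = q \<bind> s"
  proof (rule pmf_eqI)
    fix b
    show "pmf (q \<bind> s') b = pmf (q \<bind> s) b"
      using sum_cycle_shift_fst[OF N, of x y b]
      by (simp add: pmf_bind_eq_sum weighted sum.distrib flip: sum_distrib_left)
  qed
  have "measure_pmf.expectation q (\<lambda>a. measure_pmf.expectation (s' a) (U a))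
      = (\<Sum>a\<in>UNIV. \<Sum>b\<in>UNIV. (pmf q a * pmf (s a) b + \<epsilon> * cycle_shift N x y a b) * U a b)"
    by (simp add: expectation_eq_sum sum_distrib_left mult.assoc flip: weighted)
  also have "\<dots> = measure_pmf.expectation q (\<lambda>a. measure_pmf.expectation (s a) (U a))
      + \<epsilon> * ((\<Sum>i<N. U (x i) (y (Suc i mod N))) - (\<Sum>i<N. U (x i) (y i)))"
    by (simp add: expectation_eq_sum distrib_right sum.distrib sum_distrib_left mult.assoc
        flip: sum_cycle_shift_mult)
  finally show ?thesis
    using same_marginal \<epsilon>_pos gain by auto
qed

definition stage_payoff ::
  "('y0 \<Rightarrow> 'a1 \<Rightarrow> 'a2 \<Rightarrow> real) \<Rightarrow> 'a0 pmf \<Rightarrow> ('a0 \<Rightarrow> 'y0 pmf) \<Rightarrow> ('y0 \<Rightarrow> 'a1 pmf) \<Rightarrow> 'a2 pmf \<Rightarrow> real"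
where
  "stage_payoff u \<alpha>0 \<rho>0 s \<alpha>2 =
     measure_pmf.expectation (stage_outcome \<alpha>0 \<rho>0 s \<alpha>2) (\<lambda>(a0, y0, a1, a2). u y0 a1 a2)"

lemma stage_payoff_eq_u1_at:
  fixes \<alpha>0 :: "'a0::finite pmf" and \<rho>0 :: "'a0 \<Rightarrow> 'y0::finite pmf" and s :: "'y0 \<Rightarrow> 'a1::finite pmf"
    and \<alpha>2 :: "'a2::finite pmf"
  shows "stage_payoff u \<alpha>0 \<rho>0 s \<alpha>2
    = measure_pmf.expectation (\<alpha>0 \<bind> \<rho>0) (\<lambda>y0. measure_pmf.expectation (s y0) (u1_at u \<alpha>2 y0))"
  unfolding stage_payoff_def stage_outcome_def u1_at_def
  by (simp add: pmf_expectation_bind[where A=UNIV]) (simp add: expectation_eq_sum)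

lemma abs_stage_payoff_le:
  assumes "\<And>y0 a1 a2. \<bar>u y0 a1 a2\<bar> \<le> B"
  shows "\<bar>stage_payoff u \<alpha>0 \<rho>0 s \<alpha>2\<bar> \<le> B"
  unfolding stage_payoff_def using assms by (intro abs_expectation_le) auto

lemma stage_signal_eq_bind:
  "stage_signal \<alpha>0 \<rho>0 s \<alpha>2 \<rho>1 = \<alpha>0 \<bind> \<rho>0 \<bind> s \<bind> (\<lambda>a1. \<alpha>2 \<bind> \<rho>1 a1)"
  unfolding stage_signal_def stage_outcome_def
  by (simp add: bind_assoc_pmf bind_map_pmf)

lemma public_hist_cong:
  assumes "\<And>h. stage_signal (\<sigma>0 h) \<rho>0 (f h) (\<sigma>2 h) \<rho>1 = stage_signal (\<sigma>0 h) \<rho>0 (g h) (\<sigma>2 h) \<rho>1"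
  shows "public_hist \<sigma>0 \<rho>0 f \<sigma>2 \<rho>1 t = public_hist \<sigma>0 \<rho>0 g \<sigma>2 \<rho>1 t"
  by (induction t) (simp_all add: assms)

lemma summable_geometric_times_bounded:
  fixes \<delta> :: real
  assumes "0 \<le> \<delta>" "\<delta> < 1" and "\<And>t. \<bar>a t\<bar> \<le> B"
  shows "summable (\<lambda>t. \<delta> ^ t * a t)"
proof (rule summable_comparison_test)
  show "summable (\<lambda>t. \<delta> ^ t * B)"
    using assms by (intro summable_mult2 summable_geometric) auto
  show "\<exists>N. \<forall>t\<ge>N. norm (\<delta> ^ t * a t) \<le> \<delta> ^ t * B"
    using assms by (auto simp: abs_mult intro!: mult_left_mono)
qed

lemma expectation_add_point_mass:
  fixes g :: "'a \<Rightarrow> real"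
  assumes "\<And>x. \<bar>g x\<bar> \<le> B"
  shows "measure_pmf.expectation p (\<lambda>x. g x + (if x = z then d else 0))
    = measure_pmf.expectation p g + pmf p z * d"
proof -
  have "measure_pmf.expectation p (\<lambda>x. if x = z then d else 0) = pmf p z * d"
    by (subst integral_measure_pmf_real[where A="{z}"]) (auto split: if_splits)
  moreover have "integrable (measure_pmf p) g"
    using assms by (intro measure_pmf.integrable_const_bound[where B=B]) auto
  moreover have "integrable (measure_pmf p) (\<lambda>x. if x = z then d else 0)"
    by (intro measure_pmf.integrable_const_bound[where B="\<bar>d\<bar>"]) auto
  ultimately show ?thesis
    by (simp add: Bochner_Integration.integral_add)
qed

lemma suminf_discounted_less:
  fixes \<delta> :: real
  assumes \<delta>: "0 < \<delta>" "\<delta> < 1"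
    and a_bound: "\<And>t. \<bar>a t\<bar> \<le> A" and c_nonneg: "\<And>t. 0 \<le> c t" and c_bound: "\<And>t. c t \<le> C"
    and c_pos: "0 < c k"
  shows "(\<Sum>t. \<delta> ^ t * a t) < (\<Sum>t. \<delta> ^ t * (a t + c t))"
proof -
  have sum_a: "summable (\<lambda>t. \<delta> ^ t * a t)"
    using \<delta> a_bound by (intro summable_geometric_times_bounded) auto
  have sum_c: "summable (\<lambda>t. \<delta> ^ t * c t)"
    using \<delta> c_nonneg c_bound by (intro summable_geometric_times_bounded[where B=C]) auto
  have "0 < (\<Sum>t. \<delta> ^ t * c t)"
    using \<delta> c_nonneg c_pos by (intro suminf_pos2[OF sum_c, of k]) auto
  then show ?thesis
    by (simp add: distrib_left suminf_add[OF sum_a sum_c, symmetric])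
qed

lemma lr_payoff_less_of_one_shot_deviation:
  fixes \<rho>0 :: "'a0::finite \<Rightarrow> 'y0::finite pmf" and \<sigma>2 :: "'y1 list \<Rightarrow> 'a2::finite pmf"
    and f g :: "'y1 list \<Rightarrow> 'y0 \<Rightarrow> 'a1::finite pmf" and u :: "'y0 \<Rightarrow> 'a1 \<Rightarrow> 'a2 \<Rightarrow> real"
  assumes \<delta>: "0 < \<delta>" "\<delta> < 1"
    and same_hist: "\<And>t. public_hist \<sigma>0 \<rho>0 f \<sigma>2 \<rho>1 t = public_hist \<sigma>0 \<rho>0 g \<sigma>2 \<rho>1 t"
    and elsewhere: "\<And>h'. h' \<noteq> h \<Longrightarrow> f h' = g h'"
    and better: "stage_payoff u (\<sigma>0 h) \<rho>0 (g h) (\<sigma>2 h) < stage_payoff u (\<sigma>0 h) \<rho>0 (f h) (\<sigma>2 h)"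
    and reached: "h \<in> set_pmf (public_hist \<sigma>0 \<rho>0 g \<sigma>2 \<rho>1 t)"
  shows "lr_payoff \<delta> u \<sigma>0 \<rho>0 g \<sigma>2 \<rho>1 < lr_payoff \<delta> u \<sigma>0 \<rho>0 f \<sigma>2 \<rho>1"
proof -
  let ?P = "public_hist \<sigma>0 \<rho>0 g \<sigma>2 \<rho>1"
  define \<Phi> where "\<Phi> = (\<lambda>k h'. stage_payoff u (\<sigma>0 h') \<rho>0 (k h') (\<sigma>2 h'))"
  define D where "D = \<Phi> f h - \<Phi> g h"
  have D_pos: "D > 0"
    using better by (simp add: D_def \<Phi>_def)
  define B where "B = Max (range (\<lambda>(y0, a1, a2). \<bar>u y0 a1 a2\<bar>))"
  have "\<bar>u y0 a1 a2\<bar> \<le> B" for y0 a1 a2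
    unfolding B_def by (rule Max_ge) (auto intro: image_eqI[where x="(y0, a1, a2)"])
  then have \<Phi>_bound: "\<bar>\<Phi> g h'\<bar> \<le> B" for h'
    unfolding \<Phi>_def by (rule abs_stage_payoff_le)
  have "\<Phi> f = (\<lambda>h'. \<Phi> g h' + (if h' = h then D else 0))"
    using elsewhere by (auto simp: D_def \<Phi>_def)
  then have expectation_f: "measure_pmf.expectation (?P t) (\<Phi> f)
      = measure_pmf.expectation (?P t) (\<Phi> g) + pmf (?P t) h * D" for t
    using expectation_add_point_mass[OF \<Phi>_bound] by simp
  have lr_eq: "lr_payoff \<delta> u \<sigma>0 \<rho>0 k \<sigma>2 \<rho>1
      = (1 - \<delta>) * (\<Sum>t. \<delta> ^ t * measure_pmf.expectation (public_hist \<sigma>0 \<rho>0 k \<sigma>2 \<rho>1 t) (\<Phi> k))"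
    for k
    by (simp add: lr_payoff_def \<Phi>_def stage_payoff_def)
  have "(\<Sum>t. \<delta> ^ t * measure_pmf.expectation (?P t) (\<Phi> g))
      < (\<Sum>t. \<delta> ^ t * (measure_pmf.expectation (?P t) (\<Phi> g) + pmf (?P t) h * D))"
    using \<delta> \<Phi>_bound D_pos reached
    by (intro suminf_discounted_less[where A=B and C=D and k=t] abs_expectation_le)
       (auto simp: pmf_le_1 mult_left_le_one_le pmf_positive)
  then show ?thesis
    using \<delta> by (simp add: lr_eq same_hist expectation_f)
qed

theorem lemma5:
  fixes \<rho>0 :: "'a0::finite \<Rightarrow> 'y0::finite pmf"
    and \<rho>1 :: "'a1::finite \<Rightarrow> 'a2::finite \<Rightarrow> 'y1::finite pmf"
    and u0 :: "'a0 \<Rightarrow> 'a1 \<Rightarrow> real"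
    and u1 u2 :: "'y0 \<Rightarrow> 'a1 \<Rightarrow> 'a2 \<Rightarrow> real"
    and \<delta> :: real
    and prior :: "('y0 \<Rightarrow> 'a1 pmf) option pmf"
    and \<sigma>0 :: "'y1 list \<Rightarrow> 'a0 pmf"
    and \<sigma>1 :: "'y1 list \<Rightarrow> 'y0 \<Rightarrow> 'a1 pmf"
    and \<sigma>2 :: "'y1 list \<Rightarrow> 'a2 pmf"
    and t :: nat and h :: "'y1 list"
  assumes delta: "0 < \<delta>" "\<delta> < 1"
    and rho0_pos: "\<forall>a0 y0. pmf (\<rho>0 a0) y0 > 0"
    and rho1_supp: "\<forall>y1 a1 a2 a2'. pmf (\<rho>1 a1 a2) y1 > 0 \<longrightarrow> pmf (\<rho>1 a1 a2') y1 > 0"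
    and rho1_indep: "\<forall>a2. \<forall>c :: 'a1 \<Rightarrow> real.
                       (\<forall>y1. (\<Sum>a1\<in>UNIV. c a1 * pmf (\<rho>1 a1 a2) y1) = 0) \<longrightarrow> (\<forall>a1. c a1 = 0)"
    and rational_type: "None \<in> set_pmf prior"
    and sep: "cyclically_separable u1"
    and NE: "nash_eq \<rho>0 \<rho>1 u0 u1 u2 \<delta> prior \<sigma>0 \<sigma>1 \<sigma>2"
    and hist: "h \<in> set_pmf (public_hist \<sigma>0 \<rho>0 \<sigma>1 \<sigma>2 \<rho>1 t)"
  shows "strategy_cyc_monotone u1 (\<sigma>1 h)"
proof (rule ccontr)
  assume "\<not> strategy_cyc_monotone u1 (\<sigma>1 h)"
  then have not_cm: "\<not> cyc_monotone (u1_at u1 (\<sigma>2 h)) {(y0, a1). a1 \<in> set_pmf (\<sigma>1 h y0)}"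
    using sep unfolding strategy_cyc_monotone_def cyclically_separable_def by blast
  have full: "0 < pmf (\<sigma>0 h \<bind> \<rho>0) y0" for y0
    using rho0_pos set_pmf_not_empty[of "\<sigma>0 h"] by (fastforce simp: pmf_positive_iff)
  obtain s' where same_marginal: "\<sigma>0 h \<bind> \<rho>0 \<bind> s' = \<sigma>0 h \<bind> \<rho>0 \<bind> \<sigma>1 h"
    and better: "stage_payoff u1 (\<sigma>0 h) \<rho>0 (\<sigma>1 h) (\<sigma>2 h) < stage_payoff u1 (\<sigma>0 h) \<rho>0 s' (\<sigma>2 h)"
    using improving_rearrangement_if_not_cyc_monotone[OF full not_cm] by (auto simp: stage_payoff_eq_u1_at)
  define f where "f = \<sigma>1(h := s')"
  have "public_hist \<sigma>0 \<rho>0 f \<sigma>2 \<rho>1 t' = public_hist \<sigma>0 \<rho>0 \<sigma>1 \<sigma>2 \<rho>1 t'" for t'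
    by (rule public_hist_cong) (simp add: f_def stage_signal_eq_bind same_marginal)
  then have "lr_payoff \<delta> u1 \<sigma>0 \<rho>0 \<sigma>1 \<sigma>2 \<rho>1 < lr_payoff \<delta> u1 \<sigma>0 \<rho>0 f \<sigma>2 \<rho>1"
    using delta better hist by (intro lr_payoff_less_of_one_shot_deviation) (auto simp: f_def)
  then show False
    using NE unfolding nash_eq_def by (meson not_le)
qed

end
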